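(* Let $n\ge 2$ and let $\mathsf r=[r_1,\dots,r_{2n-2}]\in\textsc{fact}(\lambda_n)$. Then $\mathsf r$ is tree-like if and only if there exist integers $a_0,\dots,a_{2n-2}$ such that, for every $\ell=1,\dots,2n-2$, we have $r_\ell=(\!(a_{\ell-1},a_\ell)\!)$ and $|a_\ell-a_{\ell-1}|<n$.
   Context: The affine symmetric group $\widetilde S_n$ is the group, under composition $(vw)(k)=v(w(k))$, of bijections $w:\mathbb Z\to\mathbb Z$ with $w(i+n)=w(i)+n$ for all $i$ and $\sum_{i=1}^n w(i)=\binom{n+1}{2}$. For integers $i\not\equiv j\pmod n$, $(\!(i,j)\!)$ is the affine reflection interchanging $i+kn$ and $j+kn$ for every $k\in\mathbb Z$ and fixing all other integers; thus $(\!(i,j)\!)=(\!(j,i)\!)=(\!(i+kn,j+kn)\!)$. Let $\lambda_n\in\widetilde S_n$ be the element with $\lambda_n(k)=k+n$ if $k\not\equiv0\pmod n$ and $\lambda_n(k)=k-n(n-1)$ if $k\equiv 0\pmod n$ (translation by $(1,\dots,1,-n+1)$). The reflection length of $w$ is the minimal number of reflections with product $w$; $\lambda_n$ has reflection length $2n-2$. A factorization of $w$ is a sequence $[r_1,\dots,r_m]$ of reflections with $w=r_1r_2\cdots r_m$, and $\textsc{fact}(\lambda_n)$ is the set of factorizations of $\lambda_n$ with $m=2n-2$. A factorization $[r_1,\dots,r_{2n-2}]\in\textsc{fact}(\lambda_n)$ is tree-like if one can write $r_k=(\!(a_{k-1},b_k)\!)$ with integers $a_{k-1}<b_k$ for $1\le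 k\le 2n-2$, such that $a_k\equiv b_k\pmod n$ for $1\le k\le 2n-3$. *)

theory Defs
  imports "HOL-Number_Theory.Cong"
begin

definition affine_perm :: "nat \<Rightarrow> (int \<Rightarrow> int) \<Rightarrow> bool" where
  "affine_perm n w \<longleftrightarrow> bij w \<and> (\<forall>i. w (i + int n) = w i + int n)
     \<and> (\<Sum>i=1..int n. w i) = int n * (int n + 1) div 2"

text \<open>The affine reflection ((i,j)), meaningful for i and j incongruent mod n:
  it interchanges i+kn and j+kn for all k and fixes all other integers.\<close>
definition aff_refl :: "nat \<Rightarrow> int \<Rightarrow> int \<Rightarrow> int \<Rightarrow> int" where
  "aff_refl n i j = (\<lambda>k. if [k = i] (mod int n) then k + (j - i)
                        else if [k = j] (mod int n) then k - (j - i) else k)"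

definition is_aff_refl :: "nat \<Rightarrow> (int \<Rightarrow> int) \<Rightarrow> bool" where
  "is_aff_refl n r \<longleftrightarrow> (\<exists>i j. \<not> [i = j] (mod int n) \<and> r = aff_refl n i j)"

definition lambda_aff :: "nat \<Rightarrow> int \<Rightarrow> int" where
  "lambda_aff n = (\<lambda>k. if int n dvd k then k - int n * (int n - 1) else k + int n)"

text \<open>Product r_1 r_2 ... r_m, composition (v w)(k) = v (w k).\<close>
definition refl_prod :: "(int \<Rightarrow> int) list \<Rightarrow> int \<Rightarrow> int" where
  "refl_prod rs = foldr (\<circ>) rs id"

definition fact_lambda :: "nat \<Rightarrow> (int \<Rightarrow> int) list set" where
  "fact_lambda n = {rs. length rs = 2 * n - 2 \<and> (\<forall>r\<in>set rs. is_aff_refl n r)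
                        \<and> refl_prod rs = lambda_aff n}"

text \<open>Tree-like factorizations (list index l-1 holds r_l).\<close>
definition tree_like :: "nat \<Rightarrow> (int \<Rightarrow> int) list \<Rightarrow> bool" where
  "tree_like n rs \<longleftrightarrow> (\<exists>a b :: nat \<Rightarrow> int.
     (\<forall>k\<in>{1..2*n-2}. a (k - 1) < b k \<and> \<not> [a (k - 1) = b k] (mod int n)
                       \<and> rs ! (k - 1) = aff_refl n (a (k - 1)) (b k))
     \<and> (\<forall>k\<in>{1..2*n-3}. [a k = b k] (mod int n)))"

end

theory Submission
  imports Defs
begin

text \<open>Write the factorization as a chain r_(i+1) = ((a_i, a_(i+1))). Follow a residue
  class c, other than that of the last point a_m, through the product from the right: each
  reflection either leaves it alone or moves it by the step a_(i+1) - a_i, which is not a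
  multiple of n. Since lambda_n moves every integer by n or by -n(n-1), each of these n-1
  classes is moved at least twice; as there are only 2n-2 steps, each class is moved exactly
  twice, so the steps pair up with sums in {n, -n(n-1)}.

  Tree-like factorizations are exactly those admitting an ascending chain (shift the a_k
  along the congruences a_k = b_k mod n). In an ascending chain paired steps add up to n, so
  every step is less than n. Conversely, steps of absolute value less than n can only pair
  up to n when n >= 3, which forces all steps to be positive; for n = 2 the only other
  possibility is a chain descending by 1, which can be replaced by an ascending one.\<close>

lemma aff_refl_apply_not_cong_right:
  assumes "\<not> [x = j] (mod int n)"
  shows "aff_refl n i j x = x + (if [x = i] (mod int n) then j - i else 0)"
  using assms by (simp add: aff_refl_def)

lemma aff_refl_apply_right:
  assumes "\<not> [i = j] (mod int n)"
  shows "aff_refl n i j j = i"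
  using assms by (simp add: aff_refl_def cong_sym_eq)

lemma aff_refl_commute:
  assumes "\<not> [i = j] (mod int n)"
  shows "aff_refl n i j = aff_refl n j i"
  using assms by (auto simp: aff_refl_def fun_eq_iff cong_def)

lemma aff_refl_shift:
  assumes "[i = i'] (mod int n)"
  shows "aff_refl n i j = aff_refl n i' (j + (i' - i))"
proof -
  have "[j = j + (i' - i)] (mod int n)"
    using assms by (simp add: cong_iff_dvd_diff dvd_diff_commute)
  then have "[k = i] (mod int n) \<longleftrightarrow> [k = i'] (mod int n)"
    and "[k = j] (mod int n) \<longleftrightarrow> [k = j + (i' - i)] (mod int n)" for k
    using assms cong_trans cong_sym by metis+
  then show ?thesis
    by (simp add: aff_refl_def fun_eq_iff)
qed

lemma aff_refl_mod:
  "aff_refl n i j x mod int n = (if [x = i] (mod int n) then j mod int n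
     else if [x = j] (mod int n) then i mod int n else x mod int n)"
proof -
  have "(x + (j - i)) mod int n = (i + (j - i)) mod int n" if "[x = i] (mod int n)"
    using that unfolding cong_def by (rule mod_add_cong) simp
  moreover have "(x - (j - i)) mod int n = (j - (j - i)) mod int n" if "[x = j] (mod int n)"
    using that unfolding cong_def by (rule mod_diff_cong) simp
  ultimately show ?thesis
    by (simp add: aff_refl_def)
qed

lemma aff_refl_cong_iff:
  assumes "\<not> [i = j] (mod int n)"
  shows "[aff_refl n i j x = aff_refl n i j y] (mod int n) \<longleftrightarrow> [x = y] (mod int n)"
proof -
  let ?m = "\<lambda>x. x mod int n"
  have "?m i \<noteq> ?m j"
    using assms by (simp add: cong_def)
  then show ?thesis
    unfolding cong_def aff_refl_mod[unfolded cong_def]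
    by (cases "?m x = ?m i"; cases "?m x = ?m j"; cases "?m y = ?m i"; cases "?m y = ?m j") simp_all
qed

lemma is_aff_refl_cong_iff:
  assumes "is_aff_refl n r"
  shows "[r x = r y] (mod int n) \<longleftrightarrow> [x = y] (mod int n)"
  using assms aff_refl_cong_iff unfolding is_aff_refl_def by blast

lemma refl_prod_Nil [simp]: "refl_prod [] = id"
  by (simp add: refl_prod_def)

lemma refl_prod_Cons [simp]: "refl_prod (r # rs) = r \<circ> refl_prod rs"
  by (simp add: refl_prod_def)

lemma refl_prod_cong_iff:
  assumes "\<forall>r\<in>set rs. is_aff_refl n r"
  shows "[refl_prod rs x = refl_prod rs y] (mod int n) \<longleftrightarrow> [x = y] (mod int n)"
  using assms by (induction rs) (simp_all add: is_aff_refl_cong_iff)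

definition refl_chain :: "nat \<Rightarrow> (int \<Rightarrow> int) list \<Rightarrow> (nat \<Rightarrow> int) \<Rightarrow> bool" where
  "refl_chain n rs a \<longleftrightarrow> (\<forall>i<length rs.
     \<not> [a i = a (Suc i)] (mod int n) \<and> rs ! i = aff_refl n (a i) (a (Suc i)))"

lemma refl_chain_Cons:
  "refl_chain n (r # rs) a \<longleftrightarrow>
     \<not> [a 0 = a 1] (mod int n) \<and> r = aff_refl n (a 0) (a 1) \<and> refl_chain n rs (\<lambda>i. a (Suc i))"
  by (auto simp: refl_chain_def All_less_Suc2)

lemma refl_chain_drop:
  assumes "refl_chain n rs a"
  shows "refl_chain n (drop k rs) (\<lambda>i. a (k + i))"
  using assms by (simp add: refl_chain_def)

lemma refl_chain_is_aff_refl: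
  assumes "refl_chain n rs a" "r \<in> set rs"
  shows "is_aff_refl n r"
  using assms by (auto simp: refl_chain_def is_aff_refl_def in_set_conv_nth)

lemma refl_prod_chain_end:
  assumes "refl_chain n rs a"
  shows "refl_prod rs (a (length rs)) = a 0"
  using assms
proof (induction rs arbitrary: a)
  case (Cons r rs)
  then show ?case
    using Cons.IH[of "\<lambda>i. a (Suc i)"] by (simp add: refl_chain_Cons aff_refl_apply_right)
qed simp

lemma refl_prod_drop_chain_end:
  assumes "refl_chain n rs a" "k \<le> length rs"
  shows "refl_prod (drop k rs) (a (length rs)) = a k"
  using refl_prod_chain_end[OF refl_chain_drop[OF assms(1), of k]] assms(2) by simp

lemma refl_prod_chain_displacement:
  assumes "refl_chain n rs a" "\<not> [x = a (length rs)] (mod int n)"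
  shows "refl_prod rs x = x + (\<Sum>i<length rs.
           if [refl_prod (drop (Suc i) rs) x = a i] (mod int n) then a (Suc i) - a i else 0)"
  using assms
proof (induction rs arbitrary: a)
  case (Cons r rs)
  let ?y = "refl_prod rs x"
  have chain: "refl_chain n rs (\<lambda>i. a (Suc i))"
    and r: "r = aff_refl n (a 0) (a 1)"
    using Cons.prems(1) by (simp_all add: refl_chain_Cons)
  have "\<not> [?y = refl_prod rs (a (Suc (length rs)))] (mod int n)"
    using Cons.prems(2) refl_prod_cong_iff refl_chain_is_aff_refl[OF chain] by simp
  then have "\<not> [?y = a 1] (mod int n)"
    using refl_prod_chain_end[OF chain] by simp
  then have step: "refl_prod (r # rs) x = ?y + (if [?y = a 0] (mod int n) then a 1 - a 0 else 0)"
    by (simp add: r aff_refl_apply_not_cong_right)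
  have "(\<Sum>i<length (r # rs).
           if [refl_prod (drop (Suc i) (r # rs)) x = a i] (mod int n) then a (Suc i) - a i else 0)
        = (if [?y = a 0] (mod int n) then a 1 - a 0 else 0) + (\<Sum>i<length rs.
           if [refl_prod (drop (Suc i) rs) x = a (Suc i)] (mod int n) then a (Suc (Suc i)) - a (Suc i) else 0)"
    by (simp add: sum.lessThan_Suc_shift del: sum.lessThan_Suc)
  with step Cons.IH[OF chain] Cons.prems(2) show ?case
    by simp
qed simp

lemma lambda_aff_displacement: "lambda_aff n c - c \<in> {int n, - (int n * (int n - 1))}"
  by (simp add: lambda_aff_def)

lemma dvd_lambda_aff_displacement: "int n dvd lambda_aff n c - c"
  by (simp add: lambda_aff_def)

lemma lambda_aff_neq:
  assumes "n \<ge> 2"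
  shows "lambda_aff n c \<noteq> c"
  using assms by (simp add: lambda_aff_def)

lemma cong_preserving_surj_mod:
  assumes "n > 0" and f: "\<And>x y. [f x = f y] (mod int n) \<longleftrightarrow> [x = y] (mod int n)"
  shows "\<exists>c\<in>{0..<int n}. [f c = y] (mod int n)"
proof -
  let ?g = "\<lambda>c. f c mod int n"
  have "inj_on ?g {0..<int n}"
    using f by (auto simp: inj_on_def cong_def)
  moreover have "?g ` {0..<int n} \<subseteq> {0..<int n}"
    using assms(1) by auto
  ultimately have "?g ` {0..<int n} = {0..<int n}"
    by (simp add: endo_inj_surj)
  moreover have "y mod int n \<in> {0..<int n}"
    using assms(1) by simp
  ultimately have "y mod int n \<in> ?g ` {0..<int n}"
    by simp
  then obtain c where "c \<in> {0..<int n}" "f c mod int n = y mod int n"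
    by (rule imageE) simp
  then show ?thesis
    by (auto simp: cong_def)
qed

lemma sum_eq_lower_bound_times_card:
  fixes f :: "'a \<Rightarrow> nat"
  assumes "finite C" "\<forall>c\<in>C. k \<le> f c" "sum f C = k * card C" "c \<in> C"
  shows "f c = k"
proof -
  have "sum f C = (\<Sum>c\<in>C. k + (f c - k))"
    using assms(2) by (intro sum.cong) auto
  then have "sum f C = k * card C + (\<Sum>c\<in>C. f c - k)"
    by (simp add: sum.distrib)
  then have "(\<Sum>c\<in>C. f c - k) = 0"
    using assms(3) by simp
  then have "f c - k = 0"
    using assms(1,4) by simp
  moreover have "k \<le> f c"
    using assms(2,4) by blast
  ultimately show ?thesis
    by simp
qed

lemma ball_atLeast1_atMost_iff: "(\<forall>k\<in>{1..m}. P k) \<longleftrightarrow> (\<forall>i<m. P (Suc i))"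
  unfolding image_Suc_lessThan[symmetric] by auto

lemma tree_like_iff_ascending_chain:
  assumes "length rs = 2 * n - 2"
  shows "tree_like n rs \<longleftrightarrow> (\<exists>a. refl_chain n rs a \<and> (\<forall>i<length rs. a i < a (Suc i)))"
proof
  assume "tree_like n rs"
  then obtain A B :: "nat \<Rightarrow> int" where
    AB: "\<forall>k\<in>{1..2*n-2}. A (k - 1) < B k \<and> \<not> [A (k - 1) = B k] (mod int n)
                         \<and> rs ! (k - 1) = aff_refl n (A (k - 1)) (B k)"
    and AB_cong: "\<forall>k\<in>{1..2*n-3}. [A k = B k] (mod int n)"
    unfolding tree_like_def by blast
  have AB_step: "A i < B (Suc i)" "\<not> [A i = B (Suc i)] (mod int n)"
    "rs ! i = aff_refl n (A i) (B (Suc i))" if "i < length rs" for i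
    using AB[unfolded ball_atLeast1_atMost_iff] that by (simp_all add: assms)
  define a where "a k = A 0 + (\<Sum>i<k. B (Suc i) - A i)" for k
  have a_Suc: "a (Suc k) = a k + (B (Suc k) - A k)" for k
    by (simp add: a_def)
  have a_cong: "[a k = A k] (mod int n)" if "k < length rs" for k
    using that
  proof (induction k)
    case (Suc k)
    then have "[a k + (B (Suc k) - A k) = A k + (B (Suc k) - A k)] (mod int n)"
      by (intro cong_add) simp_all
    then have "[a (Suc k) = B (Suc k)] (mod int n)"
      by (simp add: a_Suc)
    moreover have "[A (Suc k) = B (Suc k)] (mod int n)"
      using AB_cong Suc.prems assms by auto
    ultimately show ?case
      by (metis cong_sym cong_trans)
  qed (simp add: a_def)
  have "refl_chain n rs a"
    unfolding refl_chain_def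
  proof (intro allI impI conjI)
    fix i assume i: "i < length rs"
    have "a (Suc i) = B (Suc i) + (a i - A i)"
      by (simp add: a_Suc)
    then show "rs ! i = aff_refl n (a i) (a (Suc i))"
      using AB_step(3)[OF i] aff_refl_shift[OF cong_sym[OF a_cong[OF i]], of "B (Suc i)"] by simp
    show "\<not> [a i = a (Suc i)] (mod int n)"
      using AB_step(2)[OF i] by (simp add: a_Suc cong_iff_dvd_diff)
  qed
  moreover have "\<forall>i<length rs. a i < a (Suc i)"
    using AB_step(1) by (simp add: a_Suc)
  ultimately show "\<exists>a. refl_chain n rs a \<and> (\<forall>i<length rs. a i < a (Suc i))"
    by blast
next
  assume "\<exists>a. refl_chain n rs a \<and> (\<forall>i<length rs. a i < a (Suc i))"
  then obtain a where "refl_chain n rs a" "\<forall>i<length rs. a i < a (Suc i)"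
    by blast
  then have "\<forall>k\<in>{1..2*n-2}. a (k - 1) < a k \<and> \<not> [a (k - 1) = a k] (mod int n)
               \<and> rs ! (k - 1) = aff_refl n (a (k - 1)) (a k)"
    unfolding ball_atLeast1_atMost_iff by (simp add: assms[symmetric] refl_chain_def)
  moreover have "\<forall>k\<in>{1..2*n-3}. [a k = a k] (mod int n)"
    by simp
  ultimately show "tree_like n rs"
    unfolding tree_like_def by blast
qed

lemma refl_chain_descending_two:
  assumes "refl_chain 2 rs a" "length rs = 2" "a 1 = a 0 - 1" "a 2 = a 1 - 1"
  shows "refl_chain 2 rs (\<lambda>i. a 0 - 1 + int i)"
proof -
  have "rs ! 0 = aff_refl 2 (a 0) (a 0 - 1)" "rs ! 1 = aff_refl 2 (a 0 - 1) (a 0 - 2)"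
    using assms by (auto simp: refl_chain_def numeral_2_eq_2)
  moreover have "aff_refl 2 (a 0) (a 0 - 1) = aff_refl 2 (a 0 - 1) (a 0)"
    by (rule aff_refl_commute) (simp add: cong_iff_dvd_diff)
  moreover have "aff_refl 2 (a 0 - 1) (a 0 - 2) = aff_refl 2 (a 0) (a 0 + 1)"
  proof -
    have "aff_refl 2 (a 0 - 1) (a 0 - 2) = aff_refl 2 (a 0 - 2) (a 0 - 1)"
      by (rule aff_refl_commute) (simp add: cong_iff_dvd_diff)
    also have "\<dots> = aff_refl 2 (a 0) (a 0 + 1)"
      by (subst aff_refl_shift[of "a 0 - 2" "a 0"]) (simp_all add: cong_iff_dvd_diff add.commute)
    finally show ?thesis .
  qed
  ultimately show ?thesis
    using assms(2) by (auto simp: refl_chain_def cong_iff_dvd_diff numeral_2_eq_2 less_Suc_eq)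
qed

locale lambda_chain =
  fixes n :: nat and rs :: "(int \<Rightarrow> int) list" and a :: "nat \<Rightarrow> int"
  assumes two_le_n: "2 \<le> n"
    and length_rs: "length rs = 2 * n - 2"
    and prod_rs: "refl_prod rs = lambda_aff n"
    and chain: "refl_chain n rs a"
begin

text \<open>The steps whose reflection moves the image of c under the factors to its right. For c
  not congruent to the last point, that image is never congruent to a (Suc i), so this is
  the only way the step can move it.\<close>

definition moving_steps :: "int \<Rightarrow> nat set" where
  "moving_steps c = {i \<in> {..<length rs}. [refl_prod (drop (Suc i) rs) c = a i] (mod int n)}"

lemma refl_prod_drop_cong_iff:
  "[refl_prod (drop k rs) x = refl_prod (drop k rs) y] (mod int n) \<longleftrightarrow> [x = y] (mod int n)"
  by (rule refl_prod_cong_iff) (meson chain refl_chain_is_aff_refl in_set_dropD)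

lemma lambda_aff_displacement_eq_sum:
  assumes "\<not> [c = a (length rs)] (mod int n)"
  shows "lambda_aff n c - c = (\<Sum>i\<in>moving_steps c. a (Suc i) - a i)"
  using refl_prod_chain_displacement[OF chain assms]
  unfolding moving_steps_def sum.inter_filter[OF finite_lessThan] by (simp add: prod_rs)

lemma moving_steps_disjoint:
  assumes "\<not> [c = c'] (mod int n)"
  shows "moving_steps c \<inter> moving_steps c' = {}"
proof -
  have False if "i \<in> moving_steps c" "i \<in> moving_steps c'" for i
  proof -
    let ?T = "refl_prod (drop (Suc i) rs)"
    have "[?T c = a i] (mod int n)" "[?T c' = a i] (mod int n)"
      using that by (simp_all add: moving_steps_def)
    then have "[?T c = ?T c'] (mod int n)"
      by (metis cong_sym cong_trans)
    with assms show False
      by (simp add: refl_prod_drop_cong_iff)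
  qed
  then show ?thesis
    by blast
qed

lemma moving_steps_cover:
  assumes "i < length rs"
  obtains c where "c \<in> {0..<int n}" "\<not> [c = a (length rs)] (mod int n)" "i \<in> moving_steps c"
proof -
  obtain c where c: "c \<in> {0..<int n}" "[refl_prod (drop (Suc i) rs) c = a i] (mod int n)"
    using cong_preserving_surj_mod[OF _ refl_prod_drop_cong_iff] two_le_n by fastforce
  have "\<not> [c = a (length rs)] (mod int n)"
  proof
    assume "[c = a (length rs)] (mod int n)"
    then have "[refl_prod (drop (Suc i) rs) c = refl_prod (drop (Suc i) rs) (a (length rs))] (mod int n)"
      by (simp add: refl_prod_drop_cong_iff)
    then have "[refl_prod (drop (Suc i) rs) c = a (Suc i)] (mod int n)"
      using refl_prod_drop_chain_end[OF chain, of "Suc i"] assms by simp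
    with c(2) have "[a i = a (Suc i)] (mod int n)"
      by (metis cong_sym cong_trans)
    with chain assms show False
      by (simp add: refl_chain_def)
  qed
  with c assms that show ?thesis
    by (simp add: moving_steps_def)
qed

lemma two_le_card_moving_steps:
  assumes "\<not> [c = a (length rs)] (mod int n)"
  shows "2 \<le> card (moving_steps c)"
proof (rule ccontr)
  assume "\<not> 2 \<le> card (moving_steps c)"
  moreover have "finite (moving_steps c)"
    by (simp add: moving_steps_def)
  moreover have "card (moving_steps c) = 0 \<or> card (moving_steps c) = 1"
    using \<open>\<not> 2 \<le> card (moving_steps c)\<close> by linarith
  ultimately consider "moving_steps c = {}" | i where "moving_steps c = {i}"
    by (auto simp: card_1_singleton_iff)
  then show False
  proof cases
    case 1
    then show False
      using lambda_aff_displacement_eq_sum[OF assms] lambda_aff_neq[OF two_le_n] by simp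
  next
    case (2 i)
    then have "i < length rs"
      using moving_steps_def by blast
    then have "\<not> int n dvd a (Suc i) - a i"
      using chain by (simp add: refl_chain_def cong_iff_dvd_diff dvd_diff_commute)
    then show False
      using lambda_aff_displacement_eq_sum[OF assms] dvd_lambda_aff_displacement[of n c] 2 by simp
  qed
qed

lemma card_moving_steps:
  assumes "c \<in> {0..<int n}" "\<not> [c = a (length rs)] (mod int n)"
  shows "card (moving_steps c) = 2"
proof -
  define C where "C = {0..<int n} - {a (length rs) mod int n}"
  have C_iff: "c \<in> C \<longleftrightarrow> c \<in> {0..<int n} \<and> \<not> [c = a (length rs)] (mod int n)" for c
    by (auto simp: C_def cong_def)
  have "finite C" "card C = n - 1"
    using two_le_n by (simp_all add: C_def)
  have "\<forall>c\<in>C. \<forall>c'\<in>C. c \<noteq> c' \<longrightarrow> moving_steps c \<inter> moving_steps c' = {}"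
  proof (intro ballI impI)
    fix c c' assume "c \<in> C" "c' \<in> C" "c \<noteq> c'"
    then have "\<not> [c = c'] (mod int n)"
      by (simp add: C_def cong_def)
    then show "moving_steps c \<inter> moving_steps c' = {}"
      by (rule moving_steps_disjoint)
  qed
  then have "card (\<Union>c\<in>C. moving_steps c) = (\<Sum>c\<in>C. card (moving_steps c))"
    using \<open>finite C\<close> by (intro card_UN_disjoint) (simp_all add: moving_steps_def)
  moreover have "(\<Union>c\<in>C. moving_steps c) = {..<length rs}"
  proof
    show "(\<Union>c\<in>C. moving_steps c) \<subseteq> {..<length rs}"
      by (auto simp: moving_steps_def)
    show "{..<length rs} \<subseteq> (\<Union>c\<in>C. moving_steps c)"
    proof
      fix i assume "i \<in> {..<length rs}"
      then obtain c where "c \<in> C" "i \<in> moving_steps c"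
        using moving_steps_cover C_iff by (metis lessThan_iff)
      then show "i \<in> (\<Union>c\<in>C. moving_steps c)"
        by blast
    qed
  qed
  ultimately have "(\<Sum>c\<in>C. card (moving_steps c)) = 2 * card C"
    using length_rs \<open>card C = n - 1\<close> by simp
  moreover have "\<forall>c\<in>C. 2 \<le> card (moving_steps c)"
    using two_le_card_moving_steps C_iff by blast
  moreover have "c \<in> C"
    using C_iff assms by blast
  ultimately show ?thesis
    using sum_eq_lower_bound_times_card[OF \<open>finite C\<close>, of 2 "\<lambda>c. card (moving_steps c)"] by blast
qed

lemma step_pairing:
  assumes "i < length rs"
  obtains j where "j < length rs" "j \<noteq> i"
    "(a (Suc i) - a i) + (a (Suc j) - a j) \<in> {int n, - (int n * (int n - 1))}"
proof -
  obtain c where c: "c \<in> {0..<int n}" "\<not> [c = a (length rs)] (mod int n)" "i \<in> moving_steps c"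
    using moving_steps_cover[OF assms] .
  obtain x y where "moving_steps c = {x, y}" "x \<noteq> y"
    using card_moving_steps[OF c(1,2)] card_2_iff by metis
  with c(3) obtain j where j: "moving_steps c = {i, j}" "j \<noteq> i"
    by auto
  then have "j < length rs"
    by (auto simp: moving_steps_def)
  moreover have "lambda_aff n c - c = (a (Suc i) - a i) + (a (Suc j) - a j)"
    using lambda_aff_displacement_eq_sum[OF c(2)] j by simp
  then have "(a (Suc i) - a i) + (a (Suc j) - a j) \<in> {int n, - (int n * (int n - 1))}"
    using lambda_aff_displacement[of n c] by simp
  ultimately show ?thesis
    using that j(2) by blast
qed

lemma ascending_imp_small_steps:
  assumes "\<forall>i<length rs. a i < a (Suc i)" "i < length rs"
  shows "\<bar>a (Suc i) - a i\<bar> < int n"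
proof -
  obtain j where "j < length rs"
    "(a (Suc i) - a i) + (a (Suc j) - a j) \<in> {int n, - (int n * (int n - 1))}"
    using step_pairing[OF assms(2)] .
  moreover have "0 < int n * (int n - 1)"
    using two_le_n by simp
  ultimately show ?thesis
    using assms by (fastforce simp: abs_less_iff)
qed

lemma small_steps_ascending:
  assumes "3 \<le> n" "\<forall>i<length rs. \<bar>a (Suc i) - a i\<bar> < int n" "i < length rs"
  shows "a i < a (Suc i)"
proof -
  obtain j where "j < length rs"
    and pair: "(a (Suc i) - a i) + (a (Suc j) - a j) \<in> {int n, - (int n * (int n - 1))}"
    using step_pairing[OF assms(3)] .
  then have bounds: "\<bar>a (Suc i) - a i\<bar> < int n" "\<bar>a (Suc j) - a j\<bar> < int n"
    using assms(2,3) by auto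
  have "int n * 2 \<le> int n * (int n - 1)"
    using assms(1) by (intro mult_left_mono) auto
  with pair bounds show ?thesis
    unfolding abs_less_iff by auto
qed

lemma small_steps_two_ascending_or_descending:
  assumes "n = 2" "\<forall>i<length rs. \<bar>a (Suc i) - a i\<bar> < int n"
  shows "(\<forall>i<length rs. a i < a (Suc i)) \<or> (a 1 = a 0 - 1 \<and> a 2 = a 1 - 1)"
proof -
  have len: "length rs = 2"
    using assms(1) length_rs by simp
  then obtain j where "j < 2" "j \<noteq> 0"
    "(a 1 - a 0) + (a (Suc j) - a j) \<in> {2, - 2}"
    using step_pairing[of 0] assms(1) by auto
  then have "(a 1 - a 0) + (a 2 - a 1) \<in> {2, - 2}"
    by (simp add: numeral_2_eq_2 less_Suc_eq)
  moreover have "\<bar>a 1 - a 0\<bar> < 2" "\<bar>a 2 - a 1\<bar> < 2"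
    using assms(2)[rule_format, of 0] assms(2)[rule_format, of 1] assms(1) len
    by (simp_all add: numeral_2_eq_2)
  ultimately show ?thesis
    unfolding len by (auto simp: numeral_2_eq_2 less_Suc_eq abs_less_iff)
qed

lemma small_steps_imp_ascending_chain:
  assumes "\<forall>i<length rs. \<bar>a (Suc i) - a i\<bar> < int n"
  obtains b where "refl_chain n rs b" "\<forall>i<length rs. b i < b (Suc i)"
proof (cases "n = 2")
  case True
  with assms small_steps_two_ascending_or_descending
  consider "\<forall>i<length rs. a i < a (Suc i)" | "a 1 = a 0 - 1" "a 2 = a 1 - 1"
    by blast
  then show ?thesis
  proof cases
    case 2
    show ?thesis
    proof (rule that)
      show "refl_chain n rs (\<lambda>i. a 0 - 1 + int i)"
        using refl_chain_descending_two[OF _ _ 2] chain length_rs True by simp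
    qed simp
  qed (use chain that in blast)
next
  case False
  then have "3 \<le> n"
    using two_le_n by simp
  then show ?thesis
    using that chain small_steps_ascending[OF _ assms] by blast
qed

end

lemma ascending_chain_iff_small_steps_chain:
  assumes "2 \<le> n" "length rs = 2 * n - 2" "refl_prod rs = lambda_aff n"
  shows "(\<exists>a. refl_chain n rs a \<and> (\<forall>i<length rs. a i < a (Suc i)))
    \<longleftrightarrow> (\<exists>a. refl_chain n rs a \<and> (\<forall>i<length rs. \<bar>a (Suc i) - a i\<bar> < int n))"
proof
  assume "\<exists>a. refl_chain n rs a \<and> (\<forall>i<length rs. a i < a (Suc i))"
  then obtain a where chain: "refl_chain n rs a" and ascending: "\<forall>i<length rs. a i < a (Suc i)"
    by blast
  interpret lambda_chain n rs a
    using assms chain by unfold_locales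
  show "\<exists>a. refl_chain n rs a \<and> (\<forall>i<length rs. \<bar>a (Suc i) - a i\<bar> < int n)"
    using chain ascending_imp_small_steps[OF ascending] by blast
next
  assume "\<exists>a. refl_chain n rs a \<and> (\<forall>i<length rs. \<bar>a (Suc i) - a i\<bar> < int n)"
  then obtain a where chain: "refl_chain n rs a"
    and small: "\<forall>i<length rs. \<bar>a (Suc i) - a i\<bar> < int n"
    by blast
  interpret lambda_chain n rs a
    using assms chain by unfold_locales
  obtain b where "refl_chain n rs b" "\<forall>i<length rs. b i < b (Suc i)"
    using small_steps_imp_ascending_chain[OF small] .
  then show "\<exists>a. refl_chain n rs a \<and> (\<forall>i<length rs. a i < a (Suc i))"
    by blast
qed

theorem proposition3p4:
  fixes n :: nat and rs :: "(int \<Rightarrow> int) list"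
  assumes "n \<ge> 2" and "rs \<in> fact_lambda n"
  shows "tree_like n rs \<longleftrightarrow>
    (\<exists>a :: nat \<Rightarrow> int. \<forall>l\<in>{1..2*n-2}.
        \<not> [a (l - 1) = a l] (mod int n)
        \<and> rs ! (l - 1) = aff_refl n (a (l - 1)) (a l)
        \<and> \<bar>a l - a (l - 1)\<bar> < int n)"
proof -
  have len: "length rs = 2 * n - 2" and prod: "refl_prod rs = lambda_aff n"
    using assms(2) by (simp_all add: fact_lambda_def)
  have "(\<exists>a :: nat \<Rightarrow> int. \<forall>l\<in>{1..2*n-2}.
        \<not> [a (l - 1) = a l] (mod int n)
        \<and> rs ! (l - 1) = aff_refl n (a (l - 1)) (a l)
        \<and> \<bar>a l - a (l - 1)\<bar> < int n)
      \<longleftrightarrow> (\<exists>a. refl_chain n rs a \<and> (\<forall>i<length rs. \<bar>a (Suc i) - a i\<bar> < int n))"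
    unfolding ball_atLeast1_atMost_iff by (auto simp: len refl_chain_def)
  then show ?thesis
    using tree_like_iff_ascending_chain[OF len] ascending_chain_iff_small_steps_chain[OF assms(1) len prod]
    by simp
qed

end
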